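(* Let $n\geq 1$ and $k\geq 0$ be integers, let $0\leq i\leq n-1$ and $0\leq j\leq k$, and define \[ i'=\Big\lfloor \frac{(n+1)k-(k+1)i-j}{k+1}\Big\rfloor,\qquad j'=(n+1)k-(k+1)i-j-(k+1)i'. \] Then the map $\varphi$ (defined in the context) restricts to a bijection from $\Gamma^k(n,i;j)$ onto $\Gamma^k(n,i';j')$.
   Context: For a permutation $\pi=\pi_1\cdots\pi_n$ of $[n]=\{1,\dots,n\}$, $\mathrm{des}(\pi)$ is the number of $m\in[n-1]$ with $\pi_m>\pi_{m+1}$, and $\mathrm{maxdrop}(\pi)=\max\{m-\pi_m:1\leq m\leq n\}$. $A_{n,k}$ is the set of permutations of $[n]$ with $\mathrm{maxdrop}(\pi)\leq k$. For $0\le i\le n-1$ and $0\le j\le k$, $\Gamma^k(n,i;j)$ is the set of $\pi\in A_{n,k}$ with $\mathrm{des}(\pi)=i$ and $\pi_n=n-k+j$. For a permutation $\sigma$ of $[n-1]$ and $1\leq r\leq n$, $\sigma\leftarrow r$ is the permutation of $[n]$ obtained by increasing every entry of $\sigma$ that is $\geq r$ by $1$ and then appending $r$ at the end (e.g. $3421\leftarrow 3=45213$). The map $\varphi:A_{n,k}\to A_{n,k}$ (for fixed $k$, all $n\ge1$) is defined recursively: $\varphi(1)=1$; for $n\geq 2$ and $\pi\in A_{n,k}$, let $i=\mathrm{des}(\pi)$, $j=\pi_n-n+k$, let $i',j'$ be given by $i'=\lfloor((n+1)k-(k+1)i-j)/(k+1)\rfloor$ and $j'=(n+1)k-(k+1)i-j-(k+1)i'$,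 let $\pi'$ be the permutation of $[n-1]$ order-isomorphic to $\pi_1\cdots\pi_{n-1}$ (so $\pi=\pi'\leftarrow\pi_n$), and set $\varphi(\pi)=\varphi(\pi')\leftarrow(n-k+j')$. *)

theory Defs
  imports Main
begin

text \<open>Permutations of [n] are represented as lists: pi = [pi_1, ..., pi_n] is the list
  whose (m-1)-th entry (0-indexed) is pi_m.\<close>

definition is_perm :: "nat \<Rightarrow> nat list \<Rightarrow> bool" where
  "is_perm n p \<longleftrightarrow> length p = n \<and> distinct p \<and> set p = {1..n}"

definition des :: "nat list \<Rightarrow> nat" where
  "des p = card {m. m + 1 < length p \<and> p ! m > p ! (m + 1)}"

definition maxdrop :: "nat list \<Rightarrow> int" where
  "maxdrop p = Max {int (m + 1) - int (p ! m) | m. m < length p}"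

definition A :: "nat \<Rightarrow> nat \<Rightarrow> nat list set" where
  "A n k = {p. is_perm n p \<and> maxdrop p \<le> int k}"

definition Gamma :: "nat \<Rightarrow> nat \<Rightarrow> int \<Rightarrow> int \<Rightarrow> nat list set" where
  "Gamma k n i j = {p \<in> A n k. int (des p) = i \<and> int (last p) = int n - int k + j}"

definition ins_last :: "nat list \<Rightarrow> nat \<Rightarrow> nat list" where
  "ins_last s r = map (\<lambda>x. if x \<ge> r then x + 1 else x) s @ [r]"

definition std_init :: "nat list \<Rightarrow> nat list" where
  "std_init p = map (\<lambda>x. if x > last p then x - 1 else x) (butlast p)"

lemma length_std_init [simp]: "length (std_init p) = length p - 1"
  by (simp add: std_init_def)

fun phi :: "nat \<Rightarrow> nat list \<Rightarrow> nat list" where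
  "phi k p = (if length p \<le> 1 then p else
     (let n = int (length p);
          i = int (des p);
          j = int (last p) - n + int k;
          X = (n + 1) * int k - (int k + 1) * i - j;
          i' = X div (int k + 1);
          j' = X - (int k + 1) * i'
      in ins_last (phi k (std_init p)) (nat (n - int k + j'))))"

end

theory Submission imports Defs begin

text \<open>
  Encode the pair \<open>(des \<pi>, \<pi>\<^sub>n - n + k)\<close> of \<open>\<pi> \<in> A\<^sub>n\<^sub>,\<^sub>k\<close> as the single number
  \<open>rank \<pi> = (k+1) des \<pi> + (\<pi>\<^sub>n - n + k)\<close>; since \<open>0 \<le> \<pi>\<^sub>n - n + k \<le> k\<close> it determines
  the pair, so \<open>\<Gamma>\<^sup>k(n,i;j)\<close> is a level set of the rank. We show by induction on \<open>n\<close> that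
  \<open>\<phi>\<close> is an involution of \<open>A\<^sub>n\<^sub>,\<^sub>k\<close> sending rank \<open>c\<close> to \<open>(n+1)k - c\<close>, which is the
  theorem. In the induction step, deleting the last entry of \<open>\<pi>\<close> changes \<open>(n+1)k - rank\<close>
  by a residue \<open>t < k+1\<close>; appending the new last entry of \<open>\<phi>(\<pi>)\<close> creates a descent
  exactly when adding \<open>t\<close> carries into the quotient by \<open>k+1\<close>.
\<close>

declare phi.simps [simp del]

lemma div_mod_mult_add:
  fixes K a b :: int
  assumes "0 \<le> b" "b < K"
  shows "(K * a + b) div K = a" and "(K * a + b) mod K = b"
  using assms by (simp_all add: add.commute)

lemma div_add_less_divisor:
  fixes a t K :: int
  assumes "0 \<le> t" "t < K"
  shows "(a + t) div K = a div K + (if (a + t) mod K < a mod K then 1 else 0)"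
proof -
  define q m where "q = a div K" and "m = a mod K"
  have a: "a = K * q + m" and m: "0 \<le> m" "m < K"
    using assms unfolding q_def m_def by simp_all
  show ?thesis
  proof (cases "m + t < K")
    case True
    have e: "a + t = K * q + (m + t)" using a by simp
    have "(a + t) div K = q" "(a + t) mod K = m + t"
      unfolding e using True m assms by (intro div_mod_mult_add; simp)+
    then show ?thesis using assms unfolding q_def m_def by simp
  next
    case False
    have e: "a + t = K * (q + 1) + (m + t - K)" using a by (simp add: algebra_simps)
    have "(a + t) div K = q + 1" "(a + t) mod K = m + t - K"
      unfolding e using False m assms by (intro div_mod_mult_add; simp)+
    then show ?thesis using m assms unfolding q_def m_def by simp
  qed
qed

lemma des_map_strict_mono:
  assumes "strict_mono f"
  shows "des (map f xs) = des xs"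
proof -
  have "{m. m + 1 < length xs \<and> f (xs ! (m + 1)) < f (xs ! m)}
      = {m. m + 1 < length xs \<and> xs ! (m + 1) < xs ! m}"
    using assms by (simp add: strict_mono_less)
  then show ?thesis unfolding des_def by (simp cong: conj_cong)
qed

lemma des_append_single:
  "des (xs @ [y]) = des xs + (if xs \<noteq> [] \<and> y < last xs then 1 else 0)"
proof -
  let ?S = "{m. m + 1 < length xs \<and> xs ! (m + 1) < xs ! m}"
  let ?E = "{m. m + 1 = length xs \<and> y < xs ! m}"
  have "{m. m + 1 < length (xs @ [y]) \<and> (xs @ [y]) ! (m + 1) < (xs @ [y]) ! m} = ?S \<union> ?E"
    by (auto simp: nth_append)
  moreover have "?E = (if xs \<noteq> [] \<and> y < last xs then {length xs - 1} else {})"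
    by (cases xs rule: rev_cases) auto
  moreover have "finite ?S" by (rule finite_subset[of _ "{..<length xs}"]) auto
  ultimately show ?thesis unfolding des_def by (simp add: card_Un_disjoint)
qed

lemma length_ins_last [simp]: "length (ins_last s r) = Suc (length s)"
  and last_ins_last [simp]: "last (ins_last s r) = r"
  and std_init_ins_last [simp]: "std_init (ins_last s r) = s"
  unfolding ins_last_def std_init_def by (simp_all add: map_idI)

lemma ins_last_std_init:
  assumes "distinct p" "p \<noteq> []"
  shows "ins_last (std_init p) (last p) = p"
proof -
  have p: "p = butlast p @ [last p]" using assms(2) by simp
  then have "last p \<notin> set (butlast p)" using assms(1) by (metis distinct_append not_distinct_conv_prefix)
  then have "map (\<lambda>x. if last p \<le> x then x + 1 else x) (std_init p) = butlast p"
    unfolding std_init_def map_map by (intro map_idI) auto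
  then show ?thesis unfolding ins_last_def using p by simp
qed

lemma des_ins_last:
  "des (ins_last s r) = des s + (if s \<noteq> [] \<and> r \<le> last s then 1 else 0)"
proof -
  let ?f = "\<lambda>x. if r \<le> x then x + 1 else x :: nat"
  have "strict_mono ?f" by (auto simp: strict_mono_def)
  moreover have "s \<noteq> [] \<Longrightarrow> last (map ?f s) = ?f (last s)" by (simp add: last_map)
  ultimately show ?thesis
    unfolding ins_last_def des_append_single by (auto simp: des_map_strict_mono split: if_splits)
qed

lemma is_perm_ins_last:
  assumes "is_perm m s" "1 \<le> r" "r \<le> Suc m"
  shows "is_perm (Suc m) (ins_last s r)"
proof -
  let ?f = "\<lambda>x. if r \<le> x then x + 1 else x :: nat"
  have s: "length s = m" "distinct s" "set s = {1..m}" using assms(1) unfolding is_perm_def by auto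
  have "inj ?f" by (rule injI) (auto split: if_splits)
  then have "distinct (map ?f s)" using s(2) inj_on_subset[of ?f UNIV] by (simp add: distinct_map)
  moreover have "?f ` {1..m} = {1..Suc m} - {r}"
  proof (intro equalityI subsetI)
    fix y assume y: "y \<in> {1..Suc m} - {r}"
    show "y \<in> ?f ` {1..m}"
    proof (cases "y < r")
      case True with y assms show ?thesis by (intro image_eqI[of _ _ y]) auto
    next
      case False with y assms show ?thesis by (intro image_eqI[of _ _ "y - 1"]) auto
    qed
  qed auto
  ultimately show ?thesis unfolding is_perm_def ins_last_def using s assms by auto
qed

lemma is_perm_std_init:
  assumes "is_perm (Suc m) p"
  shows "is_perm m (std_init p)"
proof -
  let ?r = "last p"
  let ?g = "\<lambda>x. if ?r < x then x - 1 else x :: nat"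
  have p: "length p = Suc m" "distinct p" "set p = {1..Suc m}" using assms unfolding is_perm_def by auto
  then have split: "p = butlast p @ [?r]" by (metis append_butlast_last_id list.size(3) nat.distinct(1))
  then have "distinct (butlast p @ [?r])" using p(2) by simp
  then have "distinct (butlast p)" "?r \<notin> set (butlast p)" by simp_all
  moreover have "set (butlast p) = {1..Suc m} - {?r}" using split p(3) calculation(2)
    by (metis Diff_insert_absorb Un_insert_right append_Nil2 list.simps(15) set_append)
  moreover have "?r \<in> {1..Suc m}" using p by (metis last_in_set list.size(3) nat.distinct(1))
  moreover have "inj_on ?g ({1..Suc m} - {?r})" by (rule inj_onI) (auto split: if_splits)
  moreover have "?g ` ({1..Suc m} - {?r}) = {1..m}"
  proof (intro equalityI subsetI)
    fix y assume y: "y \<in> {1..m}"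
    show "y \<in> ?g ` ({1..Suc m} - {?r})"
    proof (cases "y < ?r")
      case True with y show ?thesis by (intro image_eqI[of _ _ y]) auto
    next
      case False with y show ?thesis by (intro image_eqI[of _ _ "y + 1"]) auto
    qed
  qed (use calculation(4) in auto)
  ultimately show ?thesis unfolding is_perm_def std_init_def using p(1) by (simp add: distinct_map)
qed

lemma maxdrop_le_iff:
  assumes "p \<noteq> []"
  shows "maxdrop p \<le> c \<longleftrightarrow> (\<forall>m<length p. int (m + 1) - int (p ! m) \<le> c)"
proof -
  have "{int (m + 1) - int (p ! m) | m. m < length p}
      = (\<lambda>m. int (m + 1) - int (p ! m)) ` {..<length p}"
    by auto
  then show ?thesis unfolding maxdrop_def using assms by (subst Max_le_iff) auto
qed

lemma A_drops:
  assumes "p \<in> A m k" "1 \<le> m"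
  shows "length p = m" "is_perm m p" "\<forall>i<m. int (i + 1) - int (p ! i) \<le> int k"
proof -
  show len: "length p = m" and "is_perm m p" using assms(1) unfolding A_def is_perm_def by auto
  moreover have "p \<noteq> []" using len assms(2) by auto
  ultimately show "\<forall>i<m. int (i + 1) - int (p ! i) \<le> int k"
    using assms(1) maxdrop_le_iff[of p "int k"] unfolding A_def by auto
qed

lemma A_last_bounds:
  assumes "p \<in> A m k" "1 \<le> m"
  shows "int m - int k \<le> int (last p)" "1 \<le> last p" "last p \<le> m"
proof -
  note p = A_drops[OF assms]
  have "p \<noteq> []" using p(1) assms(2) by auto
  then have "last p = p ! (m - 1)" using p(1) by (simp add: last_conv_nth)
  then show "int m - int k \<le> int (last p)" using p(3)[rule_format, of "m - 1"] assms(2) by simp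
  have "last p \<in> {1..m}" using p assms(2) unfolding is_perm_def by (metis last_in_set list.size(3) not_one_le_zero)
  then show "1 \<le> last p" "last p \<le> m" by auto
qed

lemma ins_last_in_A:
  assumes s: "s \<in> A m k" "1 \<le> m" and r: "1 \<le> r" "int (Suc m) - int k \<le> int r" "r \<le> Suc m"
  shows "ins_last s r \<in> A (Suc m) k"
proof -
  note s' = A_drops[OF s]
  have "int (i + 1) - int (ins_last s r ! i) \<le> int k" if i: "i < Suc m" for i
  proof (cases "i < m")
    case True
    then have "s ! i \<le> ins_last s r ! i" using s'(1) by (simp add: ins_last_def nth_append)
    then show ?thesis using s'(3) True by force
  next
    case False
    then have "i = m" "ins_last s r ! i = r" using i s'(1) by (simp_all add: ins_last_def nth_append)
    then show ?thesis using r by simp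
  qed
  then show ?thesis
    unfolding A_def using is_perm_ins_last[OF s'(2) r(1,3)] maxdrop_le_iff[of "ins_last s r"] s'(1)
    by (simp add: ins_last_def)
qed

lemma std_init_in_A:
  assumes p: "p \<in> A (Suc m) k" and m: "1 \<le> m"
  shows "std_init p \<in> A m k"
proof -
  have "1 \<le> Suc m" by simp
  note p' = A_drops[OF p this] and last = A_last_bounds(1)[OF p this]
  have "int (i + 1) - int (std_init p ! i) \<le> int k" if i: "i < m" for i
  proof -
    have "std_init p ! i = (if last p < p ! i then p ! i - 1 else p ! i)"
      unfolding std_init_def using i p'(1) by (simp add: nth_butlast)
    then show ?thesis using last p'(3) i by (cases "last p < p ! i") force+
  qed
  moreover have "std_init p \<noteq> []" using p'(1) m by (metis length_std_init diff_Suc_1 list.size(3) not_one_le_zero)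
  ultimately show ?thesis
    unfolding A_def using is_perm_std_init[OF p'(2)] maxdrop_le_iff[of "std_init p"] p'(1) by simp
qed

definition rank :: "nat \<Rightarrow> nat list \<Rightarrow> int" where
  "rank k p = (int k + 1) * int (des p) + (int (last p) + int k - int (length p))"

text \<open>The quantity \<open>(n+1)k - (k+1)i - j\<close> whose quotient and remainder define \<open>\<phi>\<close>.\<close>

definition corank :: "nat \<Rightarrow> nat list \<Rightarrow> int" where
  "corank k p = (int (length p) + 1) * int k - rank k p"

lemma phi_step:
  assumes "2 \<le> length p"
  shows "phi k p = ins_last (phi k (std_init p))
    (nat (int (length p) - int k + corank k p mod (int k + 1)))"
proof -
  have "(int (length p) + 1) * int k - (int k + 1) * int (des p) - (int (last p) - int (length p) + int k)
      = corank k p"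
    unfolding corank_def rank_def by simp
  then show ?thesis
    using assms by (subst phi.simps) (simp only: Let_def minus_mult_div_eq_mod, simp)
qed

lemma rank_div_mod:
  assumes "p \<in> A n k" "1 \<le> n"
  shows "rank k p div (int k + 1) = int (des p)"
    and "rank k p mod (int k + 1) = int (last p) + int k - int n"
  using A_last_bounds[OF assms] A_drops(1)[OF assms]
  unfolding rank_def by (simp_all add: div_mod_mult_add)

lemma corank_eq: "corank k p = (int k + 1) * (int (length p) - int (des p)) - int (last p)"
  unfolding corank_def rank_def by (simp add: algebra_simps)

lemma corank_std_init:
  assumes p: "p \<in> A (Suc n) k" and n: "1 \<le> n"
  shows "corank k p = corank k (std_init p) + (int (last (std_init p)) - int (last p)) mod (int k + 1)"
proof -
  define p' r r0 where "p' = std_init p" and "r = last p" and "r0 = last p'"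
  define d :: int where "d = (if r \<le> r0 then 1 else 0)"
  have "1 \<le> Suc n" by simp
  note p_len = A_drops(1)[OF p this] and r = A_last_bounds[OF p this, folded r_def]
  have p': "p' \<in> A n k" unfolding p'_def using std_init_in_A[OF p n] .
  note p'_len = A_drops(1)[OF p' n] and r0 = A_last_bounds[OF p' n, folded r0_def]
  have "p = ins_last p' r"
    using ins_last_std_init p_len A_drops(2)[OF p] unfolding p'_def r_def is_perm_def by fastforce
  then have des: "int (des p) = int (des p') + d"
    using des_ins_last[of p' r] p'_len n unfolding d_def r0_def by auto
  define t where "t = (int k + 1) * (1 - d) + int r0 - int r"
  have t: "0 \<le> t" "t < int k + 1" using r r0 unfolding t_def d_def by auto
  have "int r0 - int r = (int k + 1) * (d - 1) + t" unfolding t_def by (simp add: algebra_simps)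
  then have "(int r0 - int r) mod (int k + 1) = t" using t by (simp add: div_mod_mult_add)
  moreover have "corank k p = corank k p' + t"
    unfolding corank_eq t_def des p_len p'_len r_def[symmetric] r0_def[symmetric] by (simp add: algebra_simps)
  ultimately show ?thesis unfolding p'_def r0_def r_def by simp
qed

lemma corank_mod_lower_bound:
  assumes "p \<in> A n k" "1 \<le> n"
  shows "1 \<le> int n - int k + corank k p mod (int k + 1)"
proof (cases "n \<le> k")
  case True
  note last = A_last_bounds(2,3)[OF assms]
  have "corank k p = (int k + 1) * (int n - int (des p) - 1) + (int k + 1 - int (last p))"
    using A_drops(1)[OF assms] unfolding corank_eq by (simp add: algebra_simps)
  then have "corank k p mod (int k + 1) = int k + 1 - int (last p)"
    by (simp only:) (rule div_mod_mult_add(2); use last True in simp)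
  then show ?thesis using last by simp
next
  case False
  moreover have "0 \<le> corank k p mod (int k + 1)" by simp
  ultimately show ?thesis by linarith
qed

lemma phi_involution_rank:
  assumes "1 \<le> n" "p \<in> A n k"
  shows "phi k p \<in> A n k \<and> rank k (phi k p) = corank k p \<and> phi k (phi k p) = p"
  using assms
proof (induction n arbitrary: p rule: nat_induct_at_least)
  case base
  have "length p = 1" "set p = {1}" using base unfolding A_def is_perm_def by auto
  then have p: "p = [1]" by (cases p) auto
  have "phi k [1] = [1]" by (subst phi.simps) simp
  moreover have "des [1] = 0" unfolding des_def by simp
  ultimately show ?case using base unfolding p by (simp add: rank_def corank_def)
next
  case (Suc n)
  let ?K = "int k + 1" and ?N = "Suc n"
  define p' q' r where "p' = std_init p" and "q' = phi k p'" and "r = last p"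
  define r' where "r' = nat (int ?N - int k + corank k p mod ?K)"
  have "1 \<le> ?N" by simp
  note p_len = A_drops(1)[OF Suc.prems this]
  have p': "p' \<in> A n k" unfolding p'_def using std_init_in_A[OF Suc.prems Suc.hyps] .
  from Suc.IH[OF p'] have q': "q' \<in> A n k" "rank k q' = corank k p'" "phi k q' = p'"
    unfolding q'_def by auto
  have q'_len: "length q' = n" using A_drops(1)[OF q'(1) Suc.hyps] .
  have "corank k p mod ?K < ?K" by (rule pos_mod_bound) simp
  with corank_mod_lower_bound[OF Suc.prems \<open>1 \<le> ?N\<close>]
  have r': "int r' = int ?N - int k + corank k p mod ?K" "1 \<le> r'" "r' \<le> ?N"
    unfolding r'_def by linarith+
  have phi_p: "phi k p = ins_last q' r'"
    using phi_step[of p k] p_len Suc.hyps unfolding q'_def p'_def r'_def by simp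
  have "phi k p \<in> A ?N k"
    unfolding phi_p using ins_last_in_A[OF q'(1) Suc.hyps] r' by simp
  moreover have "rank k (phi k p) = corank k p"
  proof -
    have "q' \<noteq> []" using q'_len Suc.hyps by auto
    then have "int (des (phi k p)) = corank k p' div ?K + (if r' \<le> last q' then 1 else 0)"
      using des_ins_last[of q' r'] rank_div_mod(1)[OF q'(1) Suc.hyps] q'(2) unfolding phi_p by simp
    also have "(r' \<le> last q') = (corank k p mod ?K < corank k p' mod ?K)"
      using rank_div_mod(2)[OF q'(1) Suc.hyps] q'(2) r'(1) by auto
    also have "corank k p' div ?K + (if \<dots> then 1 else 0) = corank k p div ?K"
      unfolding corank_std_init[OF Suc.prems Suc.hyps, folded p'_def]
      by (rule div_add_less_divisor[symmetric], simp, rule pos_mod_bound, simp)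
    finally show ?thesis
      using r'(1) q'_len unfolding phi_p rank_def by simp
  qed
  moreover have "phi k (phi k p) = p"
  proof -
    have "corank k (phi k p) = rank k p"
      using \<open>rank k (phi k p) = corank k p\<close> q'_len p_len unfolding phi_p corank_def by simp
    then have "phi k (phi k p) = ins_last p' (nat (int ?N - int k + rank k p mod ?K))"
      using phi_step[of "phi k p" k] Suc.hyps q'(3) q'_len unfolding phi_p by simp
    also have "\<dots> = ins_last p' r"
      using rank_div_mod(2)[OF Suc.prems \<open>1 \<le> ?N\<close>] unfolding r_def by simp
    also have "\<dots> = p"
      using ins_last_std_init A_drops(2)[OF Suc.prems \<open>1 \<le> ?N\<close>] p_len
      unfolding p'_def r_def is_perm_def by fastforce
    finally show ?thesis .
  qed
  ultimately show ?case by blast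
qed

lemma Gamma_eq_rank:
  assumes "1 \<le> n" "0 \<le> j" "j \<le> int k"
  shows "Gamma k n i j = {p \<in> A n k. rank k p = (int k + 1) * i + j}"
proof (intro set_eqI iffI)
  fix p assume "p \<in> Gamma k n i j"
  then show "p \<in> {p \<in> A n k. rank k p = (int k + 1) * i + j}"
    using A_drops(1)[OF _ assms(1)] unfolding Gamma_def rank_def by auto
next
  fix p assume p: "p \<in> {p \<in> A n k. rank k p = (int k + 1) * i + j}"
  then have "rank k p div (int k + 1) = i" "rank k p mod (int k + 1) = j"
    using assms by (simp_all add: div_mod_mult_add)
  then show "p \<in> Gamma k n i j"
    using p rank_div_mod[OF _ assms(1), of p k] unfolding Gamma_def by auto
qed

theorem theorem2p1:
  fixes n k :: nat and i j :: int
  assumes "n \<ge> 1" and "0 \<le> i" and "i \<le> int n - 1" and "0 \<le> j" and "j \<le> int k"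
  defines "i' \<equiv> ((int n + 1) * int k - (int k + 1) * i - j) div (int k + 1)"
  defines "j' \<equiv> (int n + 1) * int k - (int k + 1) * i - j - (int k + 1) * i'"
  shows "bij_betw (phi k) (Gamma k n i j) (Gamma k n i' j')"
proof -
  let ?c = "(int k + 1) * i + j"
  have c: "(int n + 1) * int k - (int k + 1) * i - j = (int n + 1) * int k - ?c" by simp
  have j': "j' = ((int n + 1) * int k - ?c) mod (int k + 1)"
    unfolding j'_def i'_def by (simp only: c minus_mult_div_eq_mod)
  have "0 \<le> j'" "j' < int k + 1" unfolding j' by (simp, rule pos_mod_bound, simp)
  moreover have "(int k + 1) * i' + j' = (int n + 1) * int k - ?c" unfolding j'_def c by simp
  ultimately have target: "Gamma k n i' j' = {p \<in> A n k. rank k p = (int n + 1) * int k - ?c}"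
    using Gamma_eq_rank[OF assms(1)] by simp
  have source: "Gamma k n i j = {p \<in> A n k. rank k p = ?c}"
    using Gamma_eq_rank[OF assms(1,4,5)] .
  have corank: "corank k p = (int n + 1) * int k - rank k p" if "p \<in> A n k" for p
    using A_drops(1)[OF that assms(1)] unfolding corank_def by simp
  note phi = phi_involution_rank[OF assms(1)]
  show ?thesis
    unfolding source target
    by (rule bij_betw_byWitness[where f' = "phi k"]) (auto simp: phi corank)
qed

end
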